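(* If $H$ is a finite graph, then there exists a $3$-edge-coloring $c:E(H)\to\{1,2,3\}$ of $H$ such that every vertex $v$ with $d_H(v)\ge 4$ is majority colored.
   Context: A vertex $v$ is majority colored if for every color $\alpha$, the number of edges incident to $v$ colored $\alpha$ is at most the number of edges incident to $v$ not colored $\alpha$. *)

theory Defs
  imports Main
begin

definition finite_simple_graph :: "'a set \<Rightarrow> 'a set set \<Rightarrow> bool" where
  "finite_simple_graph V E \<longleftrightarrow> finite V \<and> (\<forall>e\<in>E. e \<subseteq> V \<and> card e = 2)"

definition incident_edges :: "'a set set \<Rightarrow> 'a \<Rightarrow> 'a set set" where
  "incident_edges E v = {e \<in> E. v \<in> e}"

definition degree :: "'a set set \<Rightarrow> 'a \<Rightarrow> nat" where
  "degree E v = card (incident_edges E v)"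

definition majority_colored :: "'a set set \<Rightarrow> ('a set \<Rightarrow> 'c) \<Rightarrow> 'a \<Rightarrow> bool" where
  "majority_colored E c v \<longleftrightarrow>
     (\<forall>\<alpha>. card {e \<in> incident_edges E v. c e = \<alpha>} \<le> card {e \<in> incident_edges E v. c e \<noteq> \<alpha>})"

end

theory Submission
  imports Defs
begin

(* Orient the edges so that at every vertex the numbers of outgoing and incoming edges differ
   by at most one (as along an Euler tour). Cut the outgoing edges at each vertex into groups
   of at most three, and likewise the incoming ones; the groups are the vertices of a bipartite
   multigraph of maximum degree 3, which by Koenig's theorem has a proper 3-edge-coloring. A
   color then occurs at v at most ceil(out/3) + ceil(in/3) times, which is at most d(v)/2
   once d(v) >= 4. *)

definition balanced_orientation ::
    "'e set \<Rightarrow> ('e \<Rightarrow> 'v) \<Rightarrow> ('e \<Rightarrow> 'v) \<Rightarrow> ('e \<Rightarrow> 'v) \<Rightarrow> ('e \<Rightarrow> 'v) \<Rightarrow> bool" where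
  "balanced_orientation F a b T H \<longleftrightarrow>
     (\<forall>e\<in>F. (T e = a e \<and> H e = b e) \<or> (T e = b e \<and> H e = a e)) \<and>
     (\<forall>z. card {e\<in>F. T e = z} \<le> card {e\<in>F. H e = z} + 1 \<and>
          card {e\<in>F. H e = z} \<le> card {e\<in>F. T e = z} + 1)"

lemma card_fibre_eq_sum:
  "finite A \<Longrightarrow> card {x\<in>A. f x = z} = (\<Sum>x\<in>A. if f x = z then 1 else 0)"
  by (simp add: sum.inter_filter[symmetric])

lemma card_fibre_le_1:
  assumes "finite A" "\<And>x y. x \<in> A \<Longrightarrow> y \<in> A \<Longrightarrow> f x = f y \<Longrightarrow> x = y"
  shows "card {x\<in>A. f x = z} \<le> 1"
  using assms by (auto simp: card_le_Suc0_iff_eq)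

lemma balanced_orientation_if_disjoint_edges:
  assumes "finite F" and disjoint: "\<And>e f. e \<in> F \<Longrightarrow> f \<in> F \<Longrightarrow> {a e, b e} \<inter> {a f, b f} \<noteq> {} \<Longrightarrow> e = f"
  shows "balanced_orientation F a b a b"
proof -
  have "card {e\<in>F. a e = z} \<le> 1" "card {e\<in>F. b e = z} \<le> 1" for z
    by (rule card_fibre_le_1[OF assms(1)]; rule disjoint; auto)+
  then have "card {e\<in>F. a e = z} \<le> card {e\<in>F. b e = z} + 1 \<and>
      card {e\<in>F. b e = z} \<le> card {e\<in>F. a e = z} + 1" for z
    by (meson add_increasing2 le_add2 order_trans zero_le)
  then show ?thesis unfolding balanced_orientation_def by blast
qed

text \<open>Replace the path \<open>u - v - w\<close> formed by \<open>e1, e2\<close> by the single edge \<open>e1 = u - w\<close>;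
  routing \<open>e1, e2\<close> back through \<open>v\<close> in the direction of \<open>e1\<close> adds one outgoing and
  one incoming edge at \<open>v\<close>.\<close>
lemma balanced_orientation_splice:
  fixes R :: "'e set" and a b T' H' :: "'e \<Rightarrow> 'v"
  assumes "finite R" "e1 \<notin> R" "e2 \<notin> R" "e1 \<noteq> e2"
    and ends: "{a e1, b e1} = {u, v}" "{a e2, b e2} = {v, w}"
    and "balanced_orientation (insert e1 R) (a(e1 := u)) (b(e1 := w)) T' H'"
  shows "\<exists>T H. balanced_orientation (insert e1 (insert e2 R)) a b T H"
proof -
  let ?F = "insert e1 (insert e2 R)" and ?F' = "insert e1 R"
  have orient': "\<forall>e\<in>?F'. (T' e = (a(e1 := u)) e \<and> H' e = (b(e1 := w)) e) \<or>
                          (T' e = (b(e1 := w)) e \<and> H' e = (a(e1 := u)) e)"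
    and bal': "\<forall>z. card {e\<in>?F'. T' e = z} \<le> card {e\<in>?F'. H' e = z} + 1 \<and>
                   card {e\<in>?F'. H' e = z} \<le> card {e\<in>?F'. T' e = z} + 1"
    using assms(7) unfolding balanced_orientation_def by blast+
  have e1': "(T' e1 = u \<and> H' e1 = w) \<or> (T' e1 = w \<and> H' e1 = u)"
    using orient' by auto
  define T where "T = (if T' e1 = u then T'(e1 := u, e2 := v) else T'(e1 := v, e2 := w))"
  define H where "H = (if T' e1 = u then H'(e1 := v, e2 := w) else H'(e1 := u, e2 := v))"
  have orient: "(T e = a e \<and> H e = b e) \<or> (T e = b e \<and> H e = a e)" if "e \<in> ?F" for e
  proof -
    consider "e = e1" | "e = e2" | "e \<in> R" using \<open>e \<in> ?F\<close> by blast
    then show ?thesis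
    proof cases
      case 1 with ends(1) e1' assms(4) show ?thesis by (auto simp: T_def H_def doubleton_eq_iff)
    next
      case 2 with ends(2) e1' assms(4) show ?thesis by (auto simp: T_def H_def doubleton_eq_iff)
    next
      case 3 with orient' assms(2,3) show ?thesis by (auto simp: T_def H_def)
    qed
  qed
  have sum_F: "sum g ?F = g e1 + g e2 + sum g R" and sum_F': "sum g ?F' = g e1 + sum g R"
    for g :: "'e \<Rightarrow> nat"
    using assms(1-4) by simp_all
  have on_R: "sum (\<lambda>e. if T e = z then 1 else 0) R = sum (\<lambda>e. if T' e = z then 1 else 0) R"
    "sum (\<lambda>e. if H e = z then 1 else 0) R = sum (\<lambda>e. if H' e = z then 1 else 0) R" for z
    using assms(2,3) by (auto simp: T_def H_def intro!: sum.cong)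
  have on_e12: "(if T e1 = z then 1 else 0) + (if T e2 = z then 1 else 0) =
      (if T' e1 = z then 1 else 0) + (if v = z then 1 else (0::nat))"
    "(if H e1 = z then 1 else 0) + (if H e2 = z then 1 else 0) =
      (if H' e1 = z then 1 else 0) + (if v = z then 1 else (0::nat))" for z
    using assms(4) e1' by (auto simp: T_def H_def)
  have "card {e\<in>?F. T e = z} = card {e\<in>?F'. T' e = z} + (if v = z then 1 else 0)"
    "card {e\<in>?F. H e = z} = card {e\<in>?F'. H' e = z} + (if v = z then 1 else 0)" for z
    using on_e12[of z]
    unfolding card_fibre_eq_sum[OF finite.insertI[OF finite.insertI[OF assms(1)]]]
      card_fibre_eq_sum[OF finite.insertI[OF assms(1)]] sum_F sum_F' on_R
    by linarith+
  with orient bal' show ?thesis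
    unfolding balanced_orientation_def by (intro exI[of _ T] exI[of _ H]) simp
qed

lemma exists_balanced_orientation:
  fixes F :: "'e set" and a b :: "'e \<Rightarrow> 'v"
  assumes "finite F"
  shows "\<exists>T H. balanced_orientation F a b T H"
  using assms
proof (induction "card F" arbitrary: F a b rule: less_induct)
  case less
  show ?case
  proof (cases "\<exists>e1\<in>F. \<exists>e2\<in>F. e1 \<noteq> e2 \<and> {a e1, b e1} \<inter> {a e2, b e2} \<noteq> {}")
    case True
    then obtain e1 e2 v where e: "e1 \<in> F" "e2 \<in> F" "e1 \<noteq> e2" "v \<in> {a e1, b e1}" "v \<in> {a e2, b e2}"
      by blast
    have "\<exists>u. {x, y} = {u, v}" if "v \<in> {x, y}" for x y :: 'v
      using that by blast
    then obtain u w where ends: "{a e1, b e1} = {u, v}" "{a e2, b e2} = {v, w}"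
      using e(4,5) by (metis insert_commute)
    define R where "R = F - {e1, e2}"
    have F: "F = insert e1 (insert e2 R)" and R: "finite R" "e1 \<notin> R" "e2 \<notin> R"
      using e less.prems unfolding R_def by auto
    have "card (insert e1 R) < card F"
      using F R e(3) by simp
    then obtain T' H' where "balanced_orientation (insert e1 R) (a(e1 := u)) (b(e1 := w)) T' H'"
      using less.hyps R(1) by blast
    then show ?thesis
      unfolding F using balanced_orientation_splice[OF R e(3) ends] by blast
  next
    case False
    then have "balanced_orientation F a b a b"
      by (intro balanced_orientation_if_disjoint_edges less.prems) blast
    then show ?thesis by blast
  qed
qed

text \<open>\<open>F\<close> is the edge set of a bipartite multigraph in which \<open>e\<close> joins the left vertex \<open>p e\<close> to the
  right vertex \<open>q e\<close>.\<close>
definition proper_edge_coloring :: "'e set \<Rightarrow> ('e \<Rightarrow> 'l) \<Rightarrow> ('e \<Rightarrow> 'r) \<Rightarrow> ('e \<Rightarrow> 'c) \<Rightarrow> bool" where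
  "proper_edge_coloring F p q c \<longleftrightarrow>
     (\<forall>e\<in>F. \<forall>f\<in>F. e \<noteq> f \<longrightarrow> p e = p f \<or> q e = q f \<longrightarrow> c e \<noteq> c f)"

inductive_set kempe_chain :: "'e set \<Rightarrow> ('e \<Rightarrow> 'l) \<Rightarrow> ('e \<Rightarrow> 'r) \<Rightarrow> ('e \<Rightarrow> 'c) \<Rightarrow> 'r \<Rightarrow> 'c \<Rightarrow> 'c \<Rightarrow> 'e set"
  for F p q c y \<alpha> \<beta> where
  start: "f \<in> F \<Longrightarrow> q f = y \<Longrightarrow> c f = \<alpha> \<Longrightarrow> f \<in> kempe_chain F p q c y \<alpha> \<beta>"
| left_step: "f \<in> kempe_chain F p q c y \<alpha> \<beta> \<Longrightarrow> c f = \<alpha> \<Longrightarrow> g \<in> F \<Longrightarrow> p g = p f \<Longrightarrow> c g = \<beta> \<Longrightarrow>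
    g \<in> kempe_chain F p q c y \<alpha> \<beta>"
| right_step: "f \<in> kempe_chain F p q c y \<alpha> \<beta> \<Longrightarrow> c f = \<beta> \<Longrightarrow> g \<in> F \<Longrightarrow> q g = q f \<Longrightarrow> c g = \<alpha> \<Longrightarrow>
    g \<in> kempe_chain F p q c y \<alpha> \<beta>"

lemma kempe_chainD: "f \<in> kempe_chain F p q c y \<alpha> \<beta> \<Longrightarrow> f \<in> F \<and> c f \<in> {\<alpha>, \<beta>}"
  by (induction rule: kempe_chain.induct) auto

lemma kempe_chain_beta_left_partner:
  "f \<in> kempe_chain F p q c y \<alpha> \<beta> \<Longrightarrow> c f = \<beta> \<Longrightarrow> \<alpha> \<noteq> \<beta> \<Longrightarrow>
   \<exists>f'\<in>kempe_chain F p q c y \<alpha> \<beta>. c f' = \<alpha> \<and> p f' = p f"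
  by (induction rule: kempe_chain.cases) auto

lemma kempe_chain_alpha_right_partner:
  "f \<in> kempe_chain F p q c y \<alpha> \<beta> \<Longrightarrow> c f = \<alpha> \<Longrightarrow> \<alpha> \<noteq> \<beta> \<Longrightarrow>
   q f = y \<or> (\<exists>f'\<in>kempe_chain F p q c y \<alpha> \<beta>. c f' = \<beta> \<and> q f' = q f)"
  by (induction rule: kempe_chain.cases) auto

text \<open>The chain is closed under adjacency within the \<open>\<alpha>\<beta>\<close>-subgraph: this needs that \<open>\<beta>\<close>
  is missing at the start vertex \<open>y\<close>, which is thus an end of the alternating path.\<close>
lemma kempe_chain_closed:
  assumes proper: "proper_edge_coloring F p q c" and "\<alpha> \<noteq> \<beta>"
    and \<beta>_missing: "\<beta> \<notin> c ` {f\<in>F. q f = y}"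
    and f: "f \<in> kempe_chain F p q c y \<alpha> \<beta>"
    and g: "g \<in> F" "g \<noteq> f" "p g = p f \<or> q g = q f" "c g \<in> {\<alpha>, \<beta>}"
  shows "g \<in> kempe_chain F p q c y \<alpha> \<beta>"
proof -
  have fF: "f \<in> F" "c f \<in> {\<alpha>, \<beta>}" using kempe_chainD[OF f] by auto
  have unique: "h = g" if "h \<in> F" "c h = c g" "p h = p g \<or> q h = q g" for h
    using proper that g(1) unfolding proper_edge_coloring_def by metis
  have "c g \<noteq> c f" using proper fF g unfolding proper_edge_coloring_def by metis
  then consider "c f = \<alpha>" "c g = \<beta>" | "c f = \<beta>" "c g = \<alpha>" using fF g(4) by auto
  then show ?thesis
  proof cases
    case 1
    show ?thesis
    proof (cases "p g = p f")
      case True with 1 f g show ?thesis by (auto intro: kempe_chain.left_step)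
    next
      case False
      then have "q g = q f" using g(3) by simp
      with kempe_chain_alpha_right_partner[OF f 1(1) \<open>\<alpha> \<noteq> \<beta>\<close>] 1 \<beta>_missing g(1) show ?thesis
        using unique by (metis (mono_tags, lifting) image_eqI kempe_chainD mem_Collect_eq)
    qed
  next
    case 2
    show ?thesis
    proof (cases "q g = q f")
      case True with 2 f g show ?thesis by (auto intro: kempe_chain.right_step)
    next
      case False
      then have "p g = p f" using g(3) by simp
      with kempe_chain_beta_left_partner[OF f 2(1) \<open>\<alpha> \<noteq> \<beta>\<close>] 2 show ?thesis
        using unique by (metis kempe_chainD)
    qed
  qed
qed

lemma proper_edge_coloring_kempe_swap:
  assumes proper: "proper_edge_coloring F p q c" and "\<alpha> \<noteq> \<beta>"
    and \<beta>_missing: "\<beta> \<notin> c ` {f\<in>F. q f = y}"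
  shows "proper_edge_coloring F p q
           (\<lambda>f. if f \<in> kempe_chain F p q c y \<alpha> \<beta> then (if c f = \<alpha> then \<beta> else \<alpha>) else c f)"
  unfolding proper_edge_coloring_def
proof (intro ballI impI)
  let ?K = "kempe_chain F p q c y \<alpha> \<beta>"
  fix e f assume ef: "e \<in> F" "f \<in> F" "e \<noteq> f" "p e = p f \<or> q e = q f"
  have differ: "c e \<noteq> c f" using proper ef unfolding proper_edge_coloring_def by blast
  have closed: "h \<in> ?K" if "g \<in> ?K" "h \<in> F" "h \<noteq> g" "p h = p g \<or> q h = q g" "c h \<in> {\<alpha>, \<beta>}" for g h
    using kempe_chain_closed[OF proper \<open>\<alpha> \<noteq> \<beta>\<close> \<beta>_missing that(1)] that(2-5) by blast
  show "(if e \<in> ?K then (if c e = \<alpha> then \<beta> else \<alpha>) else c e) \<noteq>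
        (if f \<in> ?K then (if c f = \<alpha> then \<beta> else \<alpha>) else c f)"
    using differ closed[of e f] closed[of f e] ef \<open>\<alpha> \<noteq> \<beta>\<close>
      kempe_chainD[of e F p q c y \<alpha> \<beta>] kempe_chainD[of f F p q c y \<alpha> \<beta>]
    by auto
qed

lemma kempe_recoloring:
  assumes proper: "proper_edge_coloring F p q c"
    and \<alpha>_missing: "\<alpha> \<notin> c ` {f\<in>F. p f = x}" and \<beta>_missing: "\<beta> \<notin> c ` {f\<in>F. q f = y}"
  obtains c' where "proper_edge_coloring F p q c'" "\<forall>f\<in>F. c' f \<in> {c f, \<alpha>, \<beta>}"
    "\<alpha> \<notin> c' ` {f\<in>F. p f = x}" "\<alpha> \<notin> c' ` {f\<in>F. q f = y}"
proof (cases "\<alpha> = \<beta>")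
  case True
  show ?thesis by (rule that[of c]) (use proper \<alpha>_missing \<beta>_missing True in simp_all)
next
  case False
  let ?K = "kempe_chain F p q c y \<alpha> \<beta>"
  define c' where "c' f = (if f \<in> ?K then (if c f = \<alpha> then \<beta> else \<alpha>) else c f)" for f
  have not_at_x: "f \<notin> ?K" if fx: "f \<in> F" "p f = x" for f
  proof
    assume "f \<in> ?K"
    moreover have "c f \<noteq> \<alpha>" using \<alpha>_missing fx by blast
    ultimately have "c f = \<beta>" using kempe_chainD[of f F p q c y \<alpha> \<beta>] by blast
    then obtain f' where "f' \<in> ?K" "c f' = \<alpha>" "p f' = x"
      using kempe_chain_beta_left_partner[OF \<open>f \<in> ?K\<close> _ False] fx(2) by blast
    then show False using \<alpha>_missing kempe_chainD[of f' F p q c y \<alpha> \<beta>] by blast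
  qed
  show ?thesis
  proof (rule that[of c'])
    show "proper_edge_coloring F p q c'"
      unfolding c'_def using proper_edge_coloring_kempe_swap[OF proper False \<beta>_missing] .
    show "\<forall>f\<in>F. c' f \<in> {c f, \<alpha>, \<beta>}" by (simp add: c'_def)
    show "\<alpha> \<notin> c' ` {f\<in>F. p f = x}" using \<alpha>_missing not_at_x by (auto simp: c'_def)
    show "\<alpha> \<notin> c' ` {f\<in>F. q f = y}"
      using \<beta>_missing False kempe_chain.start[of _ F q y c \<alpha> p \<beta>]
      by (auto simp: c'_def dest: kempe_chainD)
  qed
qed

lemma proper_edge_coloring_insert:
  assumes "proper_edge_coloring F p q c" "e \<notin> F"
    "\<alpha> \<notin> c ` {f\<in>F. p f = p e}" "\<alpha> \<notin> c ` {f\<in>F. q f = q e}"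
  shows "proper_edge_coloring (insert e F) p q (c(e := \<alpha>))"
  using assms unfolding proper_edge_coloring_def by (auto simp: image_iff)

lemma exists_color_not_in_image:
  fixes c :: "'e \<Rightarrow> nat"
  assumes "finite A" "card A < k"
  shows "\<exists>\<alpha>\<in>{1..k}. \<alpha> \<notin> c ` A"
proof -
  have "card (c ` A) < card {1..k}" using assms card_image_le[of A c] by simp
  then have "\<not> {1..k} \<subseteq> c ` A" using assms(1) by (meson card_mono finite_imageI not_le)
  then show ?thesis by blast
qed

theorem bipartite_edge_coloring:
  fixes F :: "'e set" and p :: "'e \<Rightarrow> 'l" and q :: "'e \<Rightarrow> 'r"
  assumes "finite F" "\<And>x. card {e\<in>F. p e = x} \<le> k" "\<And>y. card {e\<in>F. q e = y} \<le> k"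
  shows "\<exists>c. (\<forall>e\<in>F. c e \<in> {1..k}) \<and> proper_edge_coloring F p q c"
  using assms
proof (induction F rule: finite_induct)
  case empty
  show ?case by (simp add: proper_edge_coloring_def)
next
  case (insert e F)
  have fibre_insert: "{f\<in>insert e F. t f = t e} = insert e {f\<in>F. t f = t e}" for t :: "'e \<Rightarrow> 'z"
    by auto
  have "card {f\<in>F. p f = x} \<le> card {f\<in>insert e F. p f = x}"
    "card {f\<in>F. q f = y} \<le> card {f\<in>insert e F. q f = y}" for x y
    using insert.hyps(1) by (auto intro!: card_mono)
  then have "card {f\<in>F. p f = x} \<le> k" "card {f\<in>F. q f = y} \<le> k" for x y
    using insert.prems order_trans by meson+
  then obtain c where range: "\<forall>f\<in>F. c f \<in> {1..k}" and proper: "proper_edge_coloring F p q c"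
    using insert.IH by blast
  have few: "card {f\<in>F. p f = p e} < k" "card {f\<in>F. q f = q e} < k"
    using insert.prems(1)[of "p e"] insert.prems(2)[of "q e"] insert.hyps
    unfolding fibre_insert by simp_all
  obtain \<alpha> where \<alpha>: "\<alpha> \<in> {1..k}" "\<alpha> \<notin> c ` {f\<in>F. p f = p e}"
    using exists_color_not_in_image[OF _ few(1), where c = c] insert.hyps(1) by auto
  obtain \<beta> where \<beta>: "\<beta> \<in> {1..k}" "\<beta> \<notin> c ` {f\<in>F. q f = q e}"
    using exists_color_not_in_image[OF _ few(2), where c = c] insert.hyps(1) by auto
  obtain c' where "proper_edge_coloring F p q c'" "\<forall>f\<in>F. c' f \<in> {c f, \<alpha>, \<beta>}"
    "\<alpha> \<notin> c' ` {f\<in>F. p f = p e}" "\<alpha> \<notin> c' ` {f\<in>F. q f = q e}"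
    using kempe_recoloring[OF proper \<alpha>(2) \<beta>(2)] .
  then have "(\<forall>f\<in>insert e F. (c'(e := \<alpha>)) f \<in> {1..k}) \<and>
      proper_edge_coloring (insert e F) p q (c'(e := \<alpha>))"
    using proper_edge_coloring_insert[OF _ insert.hyps(2)] range \<alpha>(1) \<beta>(1) by fastforce
  then show ?case by blast
qed

lemma div_less_ceiling_div:
  fixes n N k :: nat
  assumes "n < N" "0 < k"
  shows "n div k < (N + k - 1) div k"
proof -
  have "n div k \<le> (N - 1) div k" using assms(1) by (intro div_le_mono) simp
  also have "\<dots> < (N - 1 + k) div k" using assms(2) by (simp add: div_add_self2)
  also have "N - 1 + k = N + k - 1" using assms(1) by simp
  finally show ?thesis .
qed

lemma exists_fibrewise_grouping:
  fixes F :: "'e set" and t :: "'e \<Rightarrow> 'v"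
  assumes "finite F" "0 < k"
  obtains g :: "'e \<Rightarrow> nat" where
    "\<And>z j. card {e\<in>F. t e = z \<and> g e = j} \<le> k"
    "\<And>e. e \<in> F \<Longrightarrow> g e < (card {f\<in>F. t f = t e} + k - 1) div k"
proof -
  have "\<forall>z. \<exists>h. bij_betw h {e\<in>F. t e = z} {0..<card {e\<in>F. t e = z}}"
    using assms(1) by (simp add: ex_bij_betw_finite_nat)
  then obtain h where h: "\<And>z. bij_betw (h z) {e\<in>F. t e = z} {0..<card {e\<in>F. t e = z}}"
    by metis
  show ?thesis
  proof (rule that[of "\<lambda>e. h (t e) e div k"])
    fix z j
    let ?G = "{e\<in>F. t e = z \<and> h (t e) e div k = j}"
    have "inj_on (h z) ?G"
      using h[of z] unfolding bij_betw_def by (rule inj_on_subset[OF conjunct1]) auto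
    moreover have "h z ` ?G \<subseteq> {k * j..<k * j + k}"
      using dividend_less_times_div[OF assms(2)] by (auto simp: ac_simps)
    ultimately show "card ?G \<le> k"
      using card_inj_on_le[of "h z" ?G "{k * j..<k * j + k}"] by simp
  next
    fix e assume "e \<in> F"
    then have "h (t e) e < card {f\<in>F. t f = t e}"
      using h[of "t e"] unfolding bij_betw_def by auto
    then show "h (t e) e div k < (card {f\<in>F. t f = t e} + k - 1) div k"
      using div_less_ceiling_div assms(2) by blast
  qed
qed

lemma card_color_class_le_groups:
  assumes "finite F"
    and "\<And>e f. e \<in> F \<Longrightarrow> f \<in> F \<Longrightarrow> t e = t f \<Longrightarrow> g e = g f \<Longrightarrow> c e = c f \<Longrightarrow> e = f"
    and "\<And>e. e \<in> F \<Longrightarrow> g e < m (t e)"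
  shows "card {e\<in>F. t e = z \<and> c e = \<alpha>} \<le> m z"
proof -
  let ?C = "{e\<in>F. t e = z \<and> c e = \<alpha>}"
  have "inj_on g ?C" using assms(2) by (auto intro: inj_onI)
  moreover have "g ` ?C \<subseteq> {..<m z}" using assms(3) by auto
  ultimately show ?thesis using card_inj_on_le[of g ?C "{..<m z}"] by simp
qed

lemma exists_coloring_spread_at_endpoints:
  fixes F :: "'e set" and T H :: "'e \<Rightarrow> 'v"
  assumes "finite F" "0 < k"
  shows "\<exists>c. (\<forall>e\<in>F. c e \<in> {1..k}) \<and>
    (\<forall>z \<alpha>. card {e\<in>F. T e = z \<and> c e = \<alpha>} \<le> (card {e\<in>F. T e = z} + k - 1) div k \<and>
           card {e\<in>F. H e = z \<and> c e = \<alpha>} \<le> (card {e\<in>F. H e = z} + k - 1) div k)"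
proof -
  obtain gT where gT: "\<And>z j. card {e\<in>F. T e = z \<and> gT e = j} \<le> k"
    "\<And>e. e \<in> F \<Longrightarrow> gT e < (card {f\<in>F. T f = T e} + k - 1) div k"
    using exists_fibrewise_grouping[OF assms] by blast
  obtain gH where gH: "\<And>z j. card {e\<in>F. H e = z \<and> gH e = j} \<le> k"
    "\<And>e. e \<in> F \<Longrightarrow> gH e < (card {f\<in>F. H f = H e} + k - 1) div k"
    using exists_fibrewise_grouping[OF assms] by blast
  text \<open>Each group of at most \<open>k\<close> edges with a common tail (head) becomes one left (right) vertex
    of a bipartite multigraph of maximum degree \<open>k\<close>.\<close>
  let ?p = "\<lambda>e. (T e, gT e)" and ?q = "\<lambda>e. (H e, gH e)"
  have deg: "card {e\<in>F. ?p e = x} \<le> k" "card {e\<in>F. ?q e = x} \<le> k" for x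
    using gT(1) gH(1) by (cases x; simp)+
  then obtain c where range: "\<forall>e\<in>F. c e \<in> {1..k}" and proper: "proper_edge_coloring F ?p ?q c"
    using bipartite_edge_coloring[OF assms(1) deg] by blast
  have injective: "e = f"
    if "e \<in> F" "f \<in> F" "c e = c f" "T e = T f \<and> gT e = gT f \<or> H e = H f \<and> gH e = gH f" for e f
    using proper that unfolding proper_edge_coloring_def by auto
  have "card {e\<in>F. T e = z \<and> c e = \<alpha>} \<le> (card {e\<in>F. T e = z} + k - 1) div k" for z \<alpha>
    using injective gT(2)
    by (intro card_color_class_le_groups[OF assms(1), where g = gT
          and m = "\<lambda>z. (card {f\<in>F. T f = z} + k - 1) div k"]) auto
  moreover have "card {e\<in>F. H e = z \<and> c e = \<alpha>} \<le> (card {e\<in>F. H e = z} + k - 1) div k" for z \<alpha>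
    using injective gH(2)
    by (intro card_color_class_le_groups[OF assms(1), where g = gH
          and m = "\<lambda>z. (card {f\<in>F. H f = z} + k - 1) div k"]) auto
  ultimately show ?thesis using range by blast
qed

lemma finite_simple_graph_finite_edges: "finite_simple_graph V E \<Longrightarrow> finite E"
  unfolding finite_simple_graph_def by (meson Pow_iff finite_Pow_iff rev_finite_subset subsetI)

lemma finite_simple_graph_endpoints:
  assumes "finite_simple_graph V E"
  shows "\<exists>a b. \<forall>e\<in>E. e = {a e, b e} \<and> a e \<noteq> b e"
proof -
  have "\<forall>e\<in>E. \<exists>x y. e = {x, y} \<and> x \<noteq> y"
    using assms unfolding finite_simple_graph_def by (auto simp: card_2_iff)
  then show ?thesis by metis
qed

lemma double_ceiling_thirds_le:
  fixes m i :: nat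
  assumes "m \<le> i + 1" "i \<le> m + 1" "4 \<le> m + i"
  shows "2 * ((m + 2) div 3 + (i + 2) div 3) \<le> m + i"
proof (cases "8 \<le> m + i")
  case True
  have "3 * ((m + 2) div 3) \<le> m + 2" "3 * ((i + 2) div 3) \<le> i + 2" by simp_all
  with True show ?thesis by simp
next
  case False
  with assms have "m \<in> {2, 3, 4}" "i \<in> {2, 3, 4}" by auto
  with assms False show ?thesis by auto
qed

lemma majority_colored_if_spread:
  fixes E :: "'a set set" and T H :: "'a set \<Rightarrow> 'a"
  assumes "finite E" and ends: "\<And>e. e \<in> E \<Longrightarrow> e = {T e, H e}"
    and no_loops: "\<And>e. e \<in> E \<Longrightarrow> T e \<noteq> H e"
    and balanced: "card {e\<in>E. T e = v} \<le> card {e\<in>E. H e = v} + 1"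
      "card {e\<in>E. H e = v} \<le> card {e\<in>E. T e = v} + 1"
    and "4 \<le> degree E v"
    and spread: "\<And>\<alpha>. card {e\<in>E. T e = v \<and> c e = \<alpha>} \<le> (card {e\<in>E. T e = v} + 2) div 3"
      "\<And>\<alpha>. card {e\<in>E. H e = v \<and> c e = \<alpha>} \<le> (card {e\<in>E. H e = v} + 2) div 3"
  shows "majority_colored E c v"
  unfolding majority_colored_def
proof
  fix \<alpha>
  let ?I = "incident_edges E v"
  have incident: "v \<in> e \<longleftrightarrow> T e = v \<or> H e = v" if "e \<in> E" for e
    using ends[OF that] by (metis insert_iff singleton_iff)
  have split: "{e\<in>?I. P e} = {e\<in>E. T e = v \<and> P e} \<union> {e\<in>E. H e = v \<and> P e}" for P
    unfolding incident_edges_def using incident by blast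
  have disjoint: "{e\<in>E. T e = v \<and> P e} \<inter> {e\<in>E. H e = v \<and> P e} = {}" for P
    by (auto dest: no_loops)
  have deg: "degree E v = card {e\<in>E. T e = v} + card {e\<in>E. H e = v}"
    using split[of "\<lambda>_. True"] disjoint[of "\<lambda>_. True"] \<open>finite E\<close>
    unfolding degree_def by (simp add: card_Un_disjoint)
  have card_class: "card {e\<in>?I. c e = \<alpha>} =
      card {e\<in>E. T e = v \<and> c e = \<alpha>} + card {e\<in>E. H e = v \<and> c e = \<alpha>}"
    using split[of "\<lambda>e. c e = \<alpha>"] disjoint[of "\<lambda>e. c e = \<alpha>"] \<open>finite E\<close>
    by (simp add: card_Un_disjoint)
  have "2 * card {e\<in>?I. c e = \<alpha>} \<le>
      2 * ((card {e\<in>E. T e = v} + 2) div 3 + (card {e\<in>E. H e = v} + 2) div 3)"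
    using spread[of \<alpha>] unfolding card_class by simp
  also have "\<dots> \<le> degree E v"
    using \<open>4 \<le> degree E v\<close> unfolding deg by (rule double_ceiling_thirds_le[OF balanced])
  finally have "2 * card {e\<in>?I. c e = \<alpha>} \<le> degree E v" .
  moreover have "card {e\<in>?I. c e = \<alpha>} + card {e\<in>?I. c e \<noteq> \<alpha>} = degree E v"
    unfolding degree_def using \<open>finite E\<close>
    by (subst card_Un_disjoint[symmetric])
      (auto simp: incident_edges_def intro: arg_cong[where f = card])
  ultimately show "card {e\<in>?I. c e = \<alpha>} \<le> card {e\<in>?I. c e \<noteq> \<alpha>}" by linarith
qed

theorem mainTheorem11:
  fixes V :: "'a set" and E :: "'a set set"
  assumes "finite_simple_graph V E"
  shows "\<exists>c :: 'a set \<Rightarrow> nat. (\<forall>e\<in>E. c e \<in> {1, 2, 3}) \<and>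
           (\<forall>v\<in>V. degree E v \<ge> 4 \<longrightarrow> majority_colored E c v)"
proof -
  have "finite E" using assms by (rule finite_simple_graph_finite_edges)
  obtain a b where ab: "\<forall>e\<in>E. e = {a e, b e} \<and> a e \<noteq> b e"
    using finite_simple_graph_endpoints[OF assms] by blast
  obtain T H where orient: "\<forall>e\<in>E. (T e = a e \<and> H e = b e) \<or> (T e = b e \<and> H e = a e)"
    and balanced: "\<And>z. card {e\<in>E. T e = z} \<le> card {e\<in>E. H e = z} + 1"
      "\<And>z. card {e\<in>E. H e = z} \<le> card {e\<in>E. T e = z} + 1"
    using exists_balanced_orientation[OF \<open>finite E\<close>, of a b]
    unfolding balanced_orientation_def by blast
  have ends: "e = {T e, H e}" "T e \<noteq> H e" if "e \<in> E" for e
    using ab orient that by (metis insert_commute, metis)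
  obtain c :: "'a set \<Rightarrow> nat" where range: "\<forall>e\<in>E. c e \<in> {1..3}"
    and spread: "\<And>z \<alpha>. card {e\<in>E. T e = z \<and> c e = \<alpha>} \<le> (card {e\<in>E. T e = z} + 2) div 3"
      "\<And>z \<alpha>. card {e\<in>E. H e = z \<and> c e = \<alpha>} \<le> (card {e\<in>E. H e = z} + 2) div 3"
    using exists_coloring_spread_at_endpoints[OF \<open>finite E\<close>, of 3 T H] by simp blast
  have majority: "majority_colored E c v" if "4 \<le> degree E v" for v
    by (rule majority_colored_if_spread[OF \<open>finite E\<close> ends balanced that spread])
  have "\<forall>e\<in>E. c e \<in> {1, 2, 3}" using range by auto
  with majority show ?thesis by blast
qed

end
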